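(* Let $P\subset\mathbb{R}^{n+1}$ be a convex polytope and $M=\partial P$ with its intrinsic metric. Suppose that $M$ is symmetric with respect to a hyperplane $H$, and let $r_H$ denote the reflection in $H$. Let $p,q\in M$ with $q$ a farthest point of $p$. If $p,q\in M\setminus H$, then $q$ lies on the opposite side of $H$ from $p$. If $p\in H$, then $r_H(q)$ is also a farthest point of $p$.
   Context: The intrinsic metric $d$ on $M=\partial P$ is given by $d(p,q)=$ the infimum of Euclidean lengths of paths in $M$ from $p$ to $q$. A point $q\in M$ is a farthest point of $p\in M$ if $d(p,q)\ge d(p,q')$ for all $q'\in M$. *)

theory Defs
  imports "HOL-Analysis.Analysis"
begin

definition path_len :: "(real \<Rightarrow> 'a::euclidean_space) \<Rightarrow> ereal" where
  "path_len g = (SUP ts \<in> {ts. sorted ts \<and> set ts \<subseteq> {0..1}}.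
      ereal (\<Sum>i < length ts - 1. dist (g (ts ! i)) (g (ts ! Suc i))))"

definition intrinsic_dist :: "'a::euclidean_space set \<Rightarrow> 'a \<Rightarrow> 'a \<Rightarrow> ereal" where
  "intrinsic_dist M p q = (INF g \<in> {g. path g \<and> path_image g \<subseteq> M \<and>
      pathstart g = p \<and> pathfinish g = q}. path_len g)"

definition farthest_point :: "'a::euclidean_space set \<Rightarrow> 'a \<Rightarrow> 'a \<Rightarrow> bool" where
  "farthest_point M p q \<longleftrightarrow> q \<in> M \<and> (\<forall>q'\<in>M. intrinsic_dist M p q' \<le> intrinsic_dist M p q)"

definition reflect :: "'a::euclidean_space \<Rightarrow> real \<Rightarrow> 'a \<Rightarrow> 'a" where
  "reflect a b x = x - (2 * (a \<bullet> x - b) / (a \<bullet> a)) *\<^sub>R a"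

end

(*
  If p and q lie strictly on the same side of H, say at heights at least t > 0 above it,
  then d(p, q) < d(p, r_H(q)), so q is not farthest from p. To see this, fold the boundary
  onto its upper cap: reflect the part below H upward and push the slab of points at height
  below t onto the slice of P at height t, moving horizontally by nearest-point projection
  onto that slice. This map sends the boundary to itself, fixes p, sends r_H(q) to q, and
  shrinks squared distances by at least the squared change of the clipped height
  min(|height|, t). A path from p to r_H(q) crosses H, so its clipped height runs from t
  down to 0 and back; hence folding a path of length L gives a path from p to q of length
  at most L - 2t^2/L. Finiteness of d(p, r_H(q)) needs dimension at least 2: any two
  boundary points are joined by a polygonal detour outside P, whose nearest-point
  projection is a boundary path of finite length.
  For p in H, reflecting paths gives d(p, r_H(x)) <= d(p, x).
*)

theory Submission
  imports Defs
begin

section \<open>Length of a path via inscribed polygons\<close>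

fun polygon_length :: "'a::metric_space list \<Rightarrow> real" where
  "polygon_length [] = 0"
| "polygon_length [x] = 0"
| "polygon_length (x # y # xs) = dist x y + polygon_length (y # xs)"

lemma polygon_length_nonneg: "0 \<le> polygon_length xs"
  by (induction xs rule: polygon_length.induct) auto

lemma sum_dist_nth_eq_polygon_length:
  "(\<Sum>i < length xs - 1. dist (xs ! i) (xs ! Suc i)) = polygon_length xs"
proof (induction xs rule: polygon_length.induct)
  case (3 x y xs)
  then show ?case
    using sum.lessThan_Suc_shift[of "\<lambda>i. dist ((x # y # xs) ! i) ((x # y # xs) ! Suc i)"
        "length xs"]
    by simp
qed auto

lemma path_len_eq_SUP_polygon_length:
  "path_len g = (SUP ts \<in> {ts. sorted ts \<and> set ts \<subseteq> {0..1}}. ereal (polygon_length (map g ts)))"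
  unfolding path_len_def sum_dist_nth_eq_polygon_length[symmetric] by simp

lemma polygon_length_le_path_len:
  "sorted ts \<Longrightarrow> set ts \<subseteq> {0..1} \<Longrightarrow> ereal (polygon_length (map g ts)) \<le> path_len g"
  unfolding path_len_eq_SUP_polygon_length by (rule SUP_upper) simp

lemma path_len_leI:
  assumes "\<And>ts. sorted ts \<Longrightarrow> set ts \<subseteq> {0..1} \<Longrightarrow> polygon_length (map g ts) \<le> C"
  shows "path_len g \<le> ereal C"
  unfolding path_len_eq_SUP_polygon_length using assms by (auto intro: SUP_least)

lemma path_len_nonneg: "0 \<le> path_len g"
  using polygon_length_le_path_len[of "[]" g] by (simp add: zero_ereal_def)

lemma polygon_length_Cons_le: "polygon_length xs \<le> polygon_length (x # xs)"
  by (cases xs) (auto simp: polygon_length_nonneg)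

lemma polygon_length_snoc_le: "polygon_length xs \<le> polygon_length (xs @ [x])"
  by (induction xs rule: polygon_length.induct) auto

lemma polygon_length_map_Cons_insort_le:
  "polygon_length (map g (y # ts)) \<le> polygon_length (map g (y # insort x ts))"
proof (induction ts arbitrary: y)
  case (Cons z zs)
  then show ?case
    using dist_triangle[of "g y" "g z" "g x"] by (auto simp: dist_commute)
qed simp

lemma polygon_length_map_insort_le:
  "polygon_length (map g ts) \<le> polygon_length (map g (insort x ts))"
  using polygon_length_map_Cons_insort_le[of g] polygon_length_nonneg
  by (cases ts) (auto simp: dist_commute)

lemma polygon_length_map_le:
  assumes "\<And>x y. x \<in> set xs \<Longrightarrow> y \<in> set xs \<Longrightarrow>
      dist (f x) (f y) \<le> C * dist x y - l * dist (h x) (h y)"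
  shows "polygon_length (map f xs) \<le> C * polygon_length xs - l * polygon_length (map h xs)"
  using assms
proof (induction xs rule: polygon_length.induct)
  case (3 x y xs)
  then have "polygon_length (map f (y # xs)) \<le> C * polygon_length (y # xs) - l * polygon_length (map h (y # xs))"
    and "dist (f x) (f y) \<le> C * dist x y - l * dist (h x) (h y)"
    by simp_all
  then show ?case by (simp add: algebra_simps)
qed auto

lemma polygon_length_map_lipschitz:
  "C-lipschitz_on (set xs) f \<Longrightarrow> polygon_length (map f xs) \<le> C * polygon_length xs"
  using polygon_length_map_le[of xs f C 0] by (simp add: lipschitz_onD)

lemma polygon_length_sorted: "sorted (x # xs) \<Longrightarrow> polygon_length (x # xs) = last (x # xs) - x"
  by (induction xs arbitrary: x) (auto simp: dist_real_def)

lemma dist_last_le_polygon_length: "dist x (last (x # xs)) \<le> polygon_length (x # xs)"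
proof (induction xs arbitrary: x)
  case (Cons y ys)
  have "dist y (last (y # ys)) \<le> polygon_length (y # ys)" by (rule Cons.IH)
  then show ?case using dist_triangle[of x "last (y # ys)" y] by (simp add: dist_commute)
qed simp

lemma dist_add_dist_last_le_polygon_length:
  "z \<in> set (x # xs) \<Longrightarrow> dist x z + dist z (last (x # xs)) \<le> polygon_length (x # xs)"
proof (induction xs arbitrary: x)
  case (Cons y ys)
  show ?case
  proof (cases "z = x")
    case True
    then show ?thesis using dist_last_le_polygon_length[of x "y # ys"] by simp
  next
    case False
    then have "dist y z + dist z (last (y # ys)) \<le> polygon_length (y # ys)"
      using Cons by simp
    then show ?thesis using dist_triangle[of x z y] by simp
  qed
qed simp

lemma path_len_le_lipschitz:
  assumes "K-lipschitz_on {0..1} g"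
  shows "path_len g \<le> ereal K"
proof (rule path_len_leI)
  fix ts :: "real list" assume ts: "sorted ts" "set ts \<subseteq> {0..1}"
  show "polygon_length (map g ts) \<le> K"
  proof (cases ts)
    case (Cons t ts')
    have K: "0 \<le> K" using assms by (rule lipschitz_on_nonneg)
    have "polygon_length (map g ts) \<le> K * polygon_length ts"
      using ts by (intro polygon_length_map_lipschitz lipschitz_on_subset[OF assms])
    also have "polygon_length ts = last ts - t"
      using ts Cons by (simp add: polygon_length_sorted)
    also have "K * (last ts - t) \<le> K * 1"
      using ts Cons last_in_set[of ts] K by (intro mult_left_mono) auto
    finally show ?thesis by simp
  qed (simp add: lipschitz_on_nonneg[OF assms])
qed

lemma path_len_compose_le:
  assumes "1-lipschitz_on (path_image g) f"
  shows "path_len (f \<circ> g) \<le> path_len g"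
  unfolding path_len_eq_SUP_polygon_length
proof (rule SUP_mono)
  fix ts :: "real list" assume ts: "ts \<in> {ts. sorted ts \<and> set ts \<subseteq> {0..1}}"
  then have "1-lipschitz_on (set (map g ts)) f"
    by (intro lipschitz_on_subset[OF assms]) (auto simp: path_image_def)
  then have "polygon_length (map f (map g ts)) \<le> polygon_length (map g ts)"
    using polygon_length_map_lipschitz by fastforce
  then show "\<exists>ts'\<in>{ts. sorted ts \<and> set ts \<subseteq> {0..1}}.
      ereal (polygon_length (map (f \<circ> g) ts)) \<le> ereal (polygon_length (map g ts'))"
    using ts by auto
qed

lemma polygon_length_map_refine_le:
  "polygon_length (map g ts) \<le> polygon_length (map g (r # insort s ts @ [r']))"
proof -
  have "polygon_length (map g ts) \<le> polygon_length (map g (insort s ts))"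
    by (rule polygon_length_map_insort_le)
  also have "\<dots> \<le> polygon_length (map g (insort s ts) @ [g r'])"
    by (rule polygon_length_snoc_le)
  also have "\<dots> \<le> polygon_length (g r # map g (insort s ts) @ [g r'])"
    by (rule polygon_length_Cons_le)
  finally show ?thesis by simp
qed

lemma abs_le_of_sq_le_diff_sq:
  fixes d e X :: real
  assumes "0 \<le> d" "X\<^sup>2 \<le> d\<^sup>2 - e\<^sup>2"
  shows "\<bar>e\<bar> \<le> d"
proof -
  have "e\<^sup>2 \<le> d\<^sup>2" using assms(2) zero_le_power2[of X] by linarith
  then show ?thesis using abs_le_square_iff[of e d] assms(1) by simp
qed

text \<open>From \<open>X\<^sup>2 \<le> d\<^sup>2 - e\<^sup>2\<close> we get \<open>X \<le> d - e\<^sup>2/(2d)\<close>,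
  and \<open>e\<^sup>2/(2d) \<ge> l\<bar>e\<bar> - l\<^sup>2d/2\<close> by AM-GM.\<close>

lemma le_of_sq_le_diff_sq:
  fixes d e l X :: real
  assumes "0 \<le> d" "0 \<le> l" "0 \<le> X" "X\<^sup>2 \<le> d\<^sup>2 - e\<^sup>2"
  shows "X \<le> (1 + l\<^sup>2 / 2) * d - l * \<bar>e\<bar>"
proof (cases "d = 0")
  case True
  then have "X\<^sup>2 + e\<^sup>2 \<le> 0" using assms by simp
  then show ?thesis using True by (simp add: sum_power2_le_zero_iff)
next
  case False
  then have d: "0 < d" using assms by simp
  define Y where "Y = d - e\<^sup>2 / (2 * d)"
  have "\<bar>e\<bar> \<le> d" using abs_le_of_sq_le_diff_sq assms(1,4) by blast
  then have "e\<^sup>2 / (2 * d) \<le> d / 2"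
    using d abs_le_square_iff[of e d] by (simp add: field_simps power2_eq_square)
  then have "0 \<le> Y" unfolding Y_def using d by linarith
  moreover have "Y\<^sup>2 = d\<^sup>2 - e\<^sup>2 + (e\<^sup>2 / (2 * d))\<^sup>2"
    unfolding Y_def using d by (simp add: power2_eq_square field_simps)
  then have "X\<^sup>2 \<le> Y\<^sup>2" using assms(4) zero_le_power2[of "e\<^sup>2 / (2 * d)"] by linarith
  ultimately have "X \<le> Y" using power2_le_imp_le by blast
  have "0 \<le> (\<bar>e\<bar> - l * d)\<^sup>2" by simp
  then have "l * \<bar>e\<bar> - l\<^sup>2 * d / 2 \<le> e\<^sup>2 / (2 * d)"
    using d by (simp add: field_simps power2_eq_square)
  then show ?thesis using \<open>X \<le> Y\<close> unfolding Y_def by (simp add: algebra_simps)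
qed

lemma polygon_length_map_le_sq_defect:
  fixes \<tau> :: "'a::metric_space \<Rightarrow> real"
  assumes f: "\<And>x y. x \<in> set xs \<Longrightarrow> y \<in> set xs \<Longrightarrow>
      (dist (f x) (f y))\<^sup>2 \<le> (dist x y)\<^sup>2 - (\<tau> x - \<tau> y)\<^sup>2"
    and l: "0 \<le> l"
  shows "polygon_length (map f xs) \<le> (1 + l\<^sup>2 / 2) * polygon_length xs - l * polygon_length (map \<tau> xs)"
  by (rule polygon_length_map_le)
    (use le_of_sq_le_diff_sq[OF zero_le_dist l zero_le_dist f] in \<open>simp add: dist_real_def\<close>)

text \<open>Along a path of length \<open>L\<close> on which \<open>\<tau>\<close> runs from \<open>t\<close> down to \<open>0\<close> and back, \<open>\<tau>\<close> has
  variation at least \<open>2t\<close>; the previous bound with \<open>l = 2t/L\<close> then saves \<open>2t\<^sup>2/L\<close>.\<close>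

lemma path_len_compose_shortening:
  fixes g :: "real \<Rightarrow> 'a::euclidean_space" and \<tau> :: "'a \<Rightarrow> real"
  assumes L: "path_len g = ereal L" and t: "0 < t"
    and f: "\<And>x y. x \<in> path_image g \<Longrightarrow> y \<in> path_image g \<Longrightarrow>
        (dist (f x) (f y))\<^sup>2 \<le> (dist x y)\<^sup>2 - (\<tau> x - \<tau> y)\<^sup>2"
    and \<tau>: "\<tau> (g 0) = t" "\<tau> (g 1) = t" "\<tau> (g s) = 0" and s: "s \<in> {0..1}"
  shows "0 < L" and "path_len (f \<circ> g) \<le> ereal (L - 2 * t\<^sup>2 / L)"
proof -
  have chords: "polygon_length (map g ts) \<le> L" if "sorted ts" "set ts \<subseteq> {0..1}" for ts
    using polygon_length_le_path_len[OF that, of g] L by simp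
  have image: "set (map g ts) \<subseteq> path_image g" if "set ts \<subseteq> {0..1}" for ts
    using that by (auto simp: path_image_def)
  have variation: "2 * t \<le> polygon_length (map \<tau> (map g (0 # insort s ts @ [1])))" for ts
    using dist_add_dist_last_le_polygon_length[of "\<tau> (g s)" "\<tau> (g 0)" "map \<tau> (map g (insort s ts @ [1]))"]
      \<tau> t by (simp add: dist_real_def set_insort_key)
  have "2 * t \<le> 1 * polygon_length (map g [0, s, 1])"
    using variation[of "[]"] s image[of "[0, s, 1]"]
      abs_le_of_sq_le_diff_sq[OF zero_le_dist f] polygon_length_map_lipschitz[of 1 "map g [0, s, 1]" \<tau>]
    by (force simp: lipschitz_on_def dist_real_def)
  then show L0: "0 < L" using t s chords[of "[0, s, 1]"] by simp
  define l where "l = 2 * t / L"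
  have l: "0 \<le> l" using t L0 unfolding l_def by simp
  have "path_len (f \<circ> g) \<le> ereal ((1 + l\<^sup>2 / 2) * L - l * (2 * t))"
  proof (rule path_len_leI)
    fix ts :: "real list" assume ts: "sorted ts" "set ts \<subseteq> {0..1}"
    define ts' where "ts' = 0 # insort s ts @ [1]"
    have ts': "sorted ts'" "set ts' \<subseteq> {0..1}"
      using ts s unfolding ts'_def by (auto simp: sorted_append sorted_insort set_insort_key)
    have "polygon_length (map (f \<circ> g) ts) \<le> polygon_length (map f (map g ts'))"
      using polygon_length_map_refine_le[of "f \<circ> g"] by (simp add: ts'_def)
    also have "\<dots> \<le> (1 + l\<^sup>2 / 2) * polygon_length (map g ts') - l * polygon_length (map \<tau> (map g ts'))"
      using image[OF ts'(2)] by (intro polygon_length_map_le_sq_defect f l) auto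
    also have "\<dots> \<le> (1 + l\<^sup>2 / 2) * L - l * (2 * t)"
      using mult_left_mono[OF variation[of ts, folded ts'_def] l]
        mult_left_mono[OF chords[OF ts'], of "1 + l\<^sup>2 / 2"] by simp
    finally show "polygon_length (map (f \<circ> g) ts) \<le> (1 + l\<^sup>2 / 2) * L - l * (2 * t)" .
  qed
  also have "(1 + l\<^sup>2 / 2) * L - l * (2 * t) = L - 2 * t\<^sup>2 / L"
    unfolding l_def using L0 by (simp add: field_simps power2_eq_square)
  finally show "path_len (f \<circ> g) \<le> ereal (L - 2 * t\<^sup>2 / L)" .
qed

lemma intrinsic_dist_le_path_len:
  "path g \<Longrightarrow> path_image g \<subseteq> M \<Longrightarrow> intrinsic_dist M (pathstart g) (pathfinish g) \<le> path_len g"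
  unfolding intrinsic_dist_def by (rule INF_lower) simp

lemma intrinsic_dist_nonneg: "0 \<le> intrinsic_dist M p q"
  unfolding intrinsic_dist_def by (rule INF_greatest) (rule path_len_nonneg)

lemma intrinsic_dist_less_iff:
  "intrinsic_dist M p q < B \<longleftrightarrow>
    (\<exists>g. path g \<and> path_image g \<subseteq> M \<and> pathstart g = p \<and> pathfinish g = q \<and> path_len g < B)"
  unfolding intrinsic_dist_def INF_less_iff by blast

section \<open>Height above a hyperplane\<close>

definition height :: "'a::euclidean_space \<Rightarrow> real \<Rightarrow> 'a \<Rightarrow> real" where
  "height a b x = (a \<bullet> x - b) / norm a"

definition foot :: "'a::euclidean_space \<Rightarrow> real \<Rightarrow> 'a \<Rightarrow> 'a" where
  "foot a b x = x - height a b x *\<^sub>R sgn a"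

lemma inner_sgn_self: "a \<bullet> sgn a = norm a"
  by (cases "a = 0") (simp_all add: sgn_div_norm dot_square_norm power2_eq_square)

lemma foot_add_height: "foot a b x + height a b x *\<^sub>R sgn a = x"
  by (simp add: foot_def)

lemma height_add_sgn: "a \<noteq> 0 \<Longrightarrow> height a b (y + s *\<^sub>R sgn a) = height a b y + s"
  by (simp add: height_def inner_add_right inner_sgn_self field_simps)

lemma height_foot: "a \<noteq> 0 \<Longrightarrow> height a b (foot a b x) = 0"
  by (simp add: foot_def height_def inner_diff_right inner_sgn_self diff_divide_distrib)

lemma foot_add_sgn: "a \<noteq> 0 \<Longrightarrow> foot a b (y + s *\<^sub>R sgn a) = foot a b y"
  by (simp add: foot_def height_add_sgn algebra_simps)

lemma foot_eq_self: "height a b y = 0 \<Longrightarrow> foot a b y = y"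
  by (simp add: foot_def)

lemma height_eq_0_iff: "a \<noteq> 0 \<Longrightarrow> height a b x = 0 \<longleftrightarrow> a \<bullet> x = b"
  by (simp add: height_def)

lemma height_pos_iff: "a \<noteq> 0 \<Longrightarrow> 0 < height a b x \<longleftrightarrow> b < a \<bullet> x"
  by (simp add: height_def zero_less_divide_iff)

lemma continuous_on_height: "continuous_on S (height a b)"
  unfolding height_def divide_inverse by (intro continuous_intros)

lemma continuous_on_foot: "continuous_on S (foot a b)"
  unfolding foot_def by (intro continuous_intros continuous_on_height)

lemma norm_add_sgn_sq:
  assumes "a \<noteq> 0" "a \<bullet> u = 0"
  shows "(norm (u + s *\<^sub>R sgn a))\<^sup>2 = (norm u)\<^sup>2 + s\<^sup>2"
proof -
  have "sgn a \<bullet> u = 0" "sgn a \<bullet> sgn a = 1"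
    using assms by (simp_all add: sgn_div_norm dot_square_norm)
  then show ?thesis
    unfolding power2_norm_eq_inner
    by (simp add: inner_add_left inner_add_right inner_commute power2_eq_square)
qed

lemma dist_sq_eq_foot_height:
  assumes "a \<noteq> 0"
  shows "(dist x y)\<^sup>2 = (dist (foot a b x) (foot a b y))\<^sup>2 + (height a b x - height a b y)\<^sup>2"
proof -
  have "x - y = (foot a b x - foot a b y) + (height a b x - height a b y) *\<^sub>R sgn a"
    by (simp add: foot_def algebra_simps)
  moreover have "a \<bullet> (foot a b x - foot a b y) = 0"
    using height_foot[OF assms, of b x] height_foot[OF assms, of b y]
    by (simp add: height_def inner_diff_right assms)
  ultimately show ?thesis
    using norm_add_sgn_sq[OF assms] by (simp add: dist_norm)
qed

lemma reflect_eq_foot: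
  assumes "a \<noteq> 0"
  shows "reflect a b x = foot a b x - height a b x *\<^sub>R sgn a"
proof -
  have "(2 * (a \<bullet> x - b) / (a \<bullet> a)) *\<^sub>R a = (2 * height a b x) *\<^sub>R sgn a"
    using assms by (simp add: height_def sgn_div_norm dot_square_norm power2_eq_square field_simps)
  then show ?thesis by (simp add: reflect_def foot_def algebra_simps flip: scaleR_add_left)
qed

lemma height_reflect: "a \<noteq> 0 \<Longrightarrow> height a b (reflect a b x) = - height a b x"
  using height_add_sgn[of a b "foot a b x" "- height a b x"]
  by (simp add: reflect_eq_foot height_foot)

lemma foot_reflect: "a \<noteq> 0 \<Longrightarrow> foot a b (reflect a b x) = foot a b x"
  using foot_add_sgn[of a b "foot a b x" "- height a b x"]
  by (simp add: reflect_eq_foot foot_eq_self height_foot)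

lemma reflect_reflect: "a \<noteq> 0 \<Longrightarrow> reflect a b (reflect a b x) = x"
  by (metis reflect_eq_foot height_reflect foot_reflect foot_add_height scaleR_minus_left
      diff_minus_eq_add minus_minus)

lemma dist_reflect:
  assumes "a \<noteq> 0"
  shows "dist (reflect a b x) (reflect a b y) = dist x y"
proof -
  have "(dist (reflect a b x) (reflect a b y))\<^sup>2 = (dist x y)\<^sup>2"
    using dist_sq_eq_foot_height[OF assms, of "reflect a b x" "reflect a b y" b]
      dist_sq_eq_foot_height[OF assms, of x y b]
    by (simp add: height_reflect foot_reflect assms power2_commute)
  then show ?thesis by (simp add: power2_eq_iff_nonneg)
qed

lemma reflect_uminus: "reflect (- a) (- b) = reflect a b"
proof
  fix x
  have "2 * ((- a) \<bullet> x - - b) / ((- a) \<bullet> (- a)) = - (2 * (a \<bullet> x - b) / (a \<bullet> a))"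
    by (simp add: minus_divide_left algebra_simps)
  then show "reflect (- a) (- b) x = reflect a b x" unfolding reflect_def by simp
qed

lemma reflect_fixed: "a \<bullet> x = b \<Longrightarrow> reflect a b x = x"
  by (simp add: reflect_def)

lemma reflect_affine:
  assumes "u + v = 1"
  shows "reflect a b (u *\<^sub>R x + v *\<^sub>R y) = u *\<^sub>R reflect a b x + v *\<^sub>R reflect a b y"
proof -
  define A where "A = 2 * (a \<bullet> x - b) / (a \<bullet> a)"
  define B where "B = 2 * (a \<bullet> y - b) / (a \<bullet> a)"
  have "b = u * b + v * b" using assms by (metis mult.commute mult_1 distrib_left)
  then have "2 * (a \<bullet> (u *\<^sub>R x + v *\<^sub>R y) - b) = u * (2 * (a \<bullet> x - b)) + v * (2 * (a \<bullet> y - b))"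
    by (subst (1) \<open>b = u * b + v * b\<close>) (simp add: inner_add_right algebra_simps)
  then have "2 * (a \<bullet> (u *\<^sub>R x + v *\<^sub>R y) - b) / (a \<bullet> a) = u * A + v * B"
    unfolding A_def B_def by (simp add: add_divide_distrib)
  then have "reflect a b (u *\<^sub>R x + v *\<^sub>R y) = u *\<^sub>R (x - A *\<^sub>R a) + v *\<^sub>R (y - B *\<^sub>R a)"
    unfolding reflect_def by (simp add: algebra_simps)
  then show ?thesis unfolding reflect_def A_def B_def .
qed

lemma continuous_on_reflect: "continuous_on S (reflect a b)"
  unfolding reflect_def divide_inverse by (intro continuous_intros)

lemma path_crosses_hyperplane:
  assumes "path g" "0 \<le> height a b (pathstart g)" "height a b (pathfinish g) \<le> 0"
  obtains s where "s \<in> {0..1}" "height a b (g s) = 0"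
proof -
  have "continuous_on {0..1} (height a b \<circ> g)"
    using assms(1) unfolding path_def by (intro continuous_on_compose continuous_on_height)
  then show ?thesis
    using IVT2'[of "height a b \<circ> g" 1 0 0] assms(2,3) that
    by (force simp: pathstart_def pathfinish_def)
qed

lemma foot_add_in_segment_reflect:
  assumes "a \<noteq> 0" "\<bar>s\<bar> \<le> \<bar>height a b y\<bar>"
  shows "foot a b y + s *\<^sub>R sgn a \<in> closed_segment y (reflect a b y)"
proof (cases "height a b y = 0")
  case True
  then show ?thesis using assms(2) foot_eq_self[OF True] by simp
next
  case False
  define h where "h = height a b y"
  define m where "m = (1 - s / h) / 2"
  have "\<bar>s / h\<bar> \<le> 1" using assms(2) False unfolding h_def by (simp add: divide_le_eq_1)
  then have m: "0 \<le> m" "m \<le> 1" unfolding m_def abs_le_iff by auto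
  have "(1 - m) *\<^sub>R y + m *\<^sub>R reflect a b y
      = (1 - m) *\<^sub>R (foot a b y + h *\<^sub>R sgn a) + m *\<^sub>R (foot a b y - h *\<^sub>R sgn a)"
    unfolding h_def reflect_eq_foot[OF assms(1)] foot_add_height ..
  also have "\<dots> = foot a b y + ((1 - 2 * m) * h) *\<^sub>R sgn a"
    by (simp add: algebra_simps flip: scaleR_add_left)
  also have "(1 - 2 * m) * h = s" unfolding m_def using False h_def by (simp add: field_simps)
  finally show ?thesis using m by (auto simp: in_segment)
qed

context
  fixes P :: "'a::euclidean_space set" and a :: 'a and b :: real
  assumes compact: "compact P" and convex: "convex P" and a: "a \<noteq> 0"
    and symmetric: "reflect a b ` frontier P = frontier P"
begin

lemma reflect_mem: "x \<in> P \<Longrightarrow> reflect a b x \<in> P"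
proof -
  assume x: "x \<in> P"
  have "convex {y. reflect a b y \<in> P}"
    unfolding convex_def using convex by (auto simp: reflect_affine intro: convexD)
  moreover have "frontier P \<subseteq> {y. reflect a b y \<in> P}"
    using symmetric frontier_subset_closed[OF compact_imp_closed[OF compact]] by auto
  ultimately have "convex hull (frontier P) \<subseteq> {y. reflect a b y \<in> P}"
    by (rule hull_minimal[rotated])
  then show ?thesis using x Krein_Milman_frontier[OF convex compact] by auto
qed

lemma reflect_interior: "x \<in> interior P \<Longrightarrow> reflect a b x \<in> interior P"
proof -
  assume "x \<in> interior P"
  then obtain e where e: "e > 0" "ball x e \<subseteq> P" using mem_interior by blast
  have "ball (reflect a b x) e \<subseteq> P"
  proof
    fix y assume "y \<in> ball (reflect a b x) e"
    then have "reflect a b y \<in> ball x e"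
      using dist_reflect[OF a, of b "reflect a b x" y] by (simp add: reflect_reflect[OF a])
    then show "y \<in> P" using e reflect_mem[of "reflect a b y"] by (auto simp: reflect_reflect[OF a])
  qed
  then show ?thesis using e mem_interior by blast
qed

lemma foot_add_sgn_mem:
  "y \<in> P \<Longrightarrow> \<bar>s\<bar> \<le> \<bar>height a b y\<bar> \<Longrightarrow> foot a b y + s *\<^sub>R sgn a \<in> P"
  using foot_add_in_segment_reflect[OF a] closed_segment_subset[OF _ reflect_mem convex] by blast

lemma foot_add_sgn_interior:
  "y \<in> interior P \<Longrightarrow> \<bar>s\<bar> \<le> \<bar>height a b y\<bar> \<Longrightarrow> foot a b y + s *\<^sub>R sgn a \<in> interior P"
  using foot_add_in_segment_reflect[OF a]
    closed_segment_subset[OF _ reflect_interior convex_interior[OF convex]] by blast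

end

section \<open>Folding the boundary onto a cap\<close>

definition cap_slice :: "'a::euclidean_space set \<Rightarrow> 'a \<Rightarrow> real \<Rightarrow> real \<Rightarrow> 'a set" where
  "cap_slice P a b t = {y. height a b y = 0 \<and> y + t *\<^sub>R sgn a \<in> P}"

definition cap_fold :: "'a::euclidean_space set \<Rightarrow> 'a \<Rightarrow> real \<Rightarrow> real \<Rightarrow> 'a \<Rightarrow> 'a" where
  "cap_fold P a b t x =
     closest_point (cap_slice P a b t) (foot a b x) + max \<bar>height a b x\<bar> t *\<^sub>R sgn a"

definition clipped_height :: "'a::euclidean_space \<Rightarrow> real \<Rightarrow> real \<Rightarrow> 'a \<Rightarrow> real" where
  "clipped_height a b t x = min \<bar>height a b x\<bar> t"

lemma closed_cap_slice:
  assumes "closed P"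
  shows "closed (cap_slice P a b t)"
proof -
  have "cap_slice P a b t = {y. height a b y = 0} \<inter> (\<lambda>y. y + t *\<^sub>R sgn a) -` P"
    by (auto simp: cap_slice_def)
  then show ?thesis
    using assms by (auto intro!: closed_Int closed_vimage continuous_on_height
        intro: closed_Collect_eq continuous_intros)
qed

lemma convex_cap_slice:
  assumes "convex P" "a \<noteq> 0"
  shows "convex (cap_slice P a b t)"
proof -
  have "(\<lambda>y. y + t *\<^sub>R sgn a) -` P = (\<lambda>p. p - t *\<^sub>R sgn a) ` P"
    by (auto simp: image_iff) (metis add_diff_cancel)
  then have "cap_slice P a b t = {y. a \<bullet> y = b} \<inter> (\<lambda>p. p - t *\<^sub>R sgn a) ` P"
    using assms(2) by (auto simp: cap_slice_def height_eq_0_iff)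
  then show ?thesis
    using assms(1) by (simp add: convex_Int convex_hyperplane)
qed

lemma cap_fold_reflect: "a \<noteq> 0 \<Longrightarrow> cap_fold P a b t (reflect a b x) = cap_fold P a b t x"
  by (simp add: cap_fold_def foot_reflect height_reflect)

lemma max_min_abs_sq_le:
  fixes u v t :: real
  shows "(max \<bar>u\<bar> t - max \<bar>v\<bar> t)\<^sup>2 + (min \<bar>u\<bar> t - min \<bar>v\<bar> t)\<^sup>2 \<le> (u - v)\<^sup>2"
proof -
  have "(\<bar>u\<bar> - \<bar>v\<bar>)\<^sup>2 \<le> (u - v)\<^sup>2"
    by (metis abs_ge_zero abs_triangle_ineq3 power2_abs power_mono)
  moreover have "(max \<bar>u\<bar> t - max \<bar>v\<bar> t)\<^sup>2 + (min \<bar>u\<bar> t - min \<bar>v\<bar> t)\<^sup>2 \<le> (\<bar>u\<bar> - \<bar>v\<bar>)\<^sup>2"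
  proof (cases "\<bar>u\<bar> \<le> t"; cases "\<bar>v\<bar> \<le> t")
    assume "\<bar>u\<bar> \<le> t" "\<not> \<bar>v\<bar> \<le> t"
    then have "0 \<le> (t - \<bar>u\<bar>) * (\<bar>v\<bar> - t)" by simp
    then show ?thesis using \<open>\<bar>u\<bar> \<le> t\<close> \<open>\<not> \<bar>v\<bar> \<le> t\<close>
      by (simp add: max_def min_def power2_eq_square algebra_simps)
  next
    assume "\<not> \<bar>u\<bar> \<le> t" "\<bar>v\<bar> \<le> t"
    then have "0 \<le> (\<bar>u\<bar> - t) * (t - \<bar>v\<bar>)" by simp
    then show ?thesis using \<open>\<not> \<bar>u\<bar> \<le> t\<close> \<open>\<bar>v\<bar> \<le> t\<close>
      by (simp add: max_def min_def power2_eq_square algebra_simps)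
  qed (auto simp: max_def min_def power2_commute)
  ultimately show ?thesis by linarith
qed

lemma cap_fold_contraction:
  assumes "convex P" "closed P" "a \<noteq> 0" "cap_slice P a b t \<noteq> {}"
  shows "(dist (cap_fold P a b t x) (cap_fold P a b t y))\<^sup>2
    \<le> (dist x y)\<^sup>2 - (clipped_height a b t x - clipped_height a b t y)\<^sup>2"
proof -
  let ?C = "cap_slice P a b t"
  let ?cx = "closest_point ?C (foot a b x)" and ?cy = "closest_point ?C (foot a b y)"
  let ?mx = "max \<bar>height a b x\<bar> t" and ?my = "max \<bar>height a b y\<bar> t"
  have C: "closed ?C" "convex ?C" "?C \<noteq> {}"
    using assms by (simp_all add: closed_cap_slice convex_cap_slice)
  have "?cx \<in> ?C" "?cy \<in> ?C" using closest_point_in_set[OF C(1,3)] by auto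
  then have "height a b ?cx = 0" "height a b ?cy = 0" by (simp_all add: cap_slice_def)
  then have "foot a b (cap_fold P a b t x) = ?cx" "foot a b (cap_fold P a b t y) = ?cy"
    "height a b (cap_fold P a b t x) = ?mx" "height a b (cap_fold P a b t y) = ?my"
    using assms(3) by (simp_all add: cap_fold_def foot_add_sgn height_add_sgn foot_eq_self)
  then have "(dist (cap_fold P a b t x) (cap_fold P a b t y))\<^sup>2 = (dist ?cx ?cy)\<^sup>2 + (?mx - ?my)\<^sup>2"
    using dist_sq_eq_foot_height[OF assms(3)] by metis
  also have "\<dots> \<le> (dist (foot a b x) (foot a b y))\<^sup>2 + (?mx - ?my)\<^sup>2"
    using closest_point_lipschitz[OF C(2,1,3)] by (simp add: power_mono)
  also have "\<dots> \<le> (dist x y)\<^sup>2 - (clipped_height a b t x - clipped_height a b t y)\<^sup>2"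
    using max_min_abs_sq_le[of "height a b x" t "height a b y"] dist_sq_eq_foot_height[OF assms(3), of x y b]
    unfolding clipped_height_def by simp
  finally show ?thesis .
qed

lemma continuous_on_cap_fold:
  assumes "convex P" "closed P" "a \<noteq> 0" "cap_slice P a b t \<noteq> {}"
  shows "continuous_on S (cap_fold P a b t)"
  unfolding cap_fold_def
  using assms
  by (intro continuous_intros continuous_on_compose2[OF continuous_on_closest_point]
      continuous_on_foot continuous_on_height closed_cap_slice convex_cap_slice) auto

text \<open>If the point at height \<open>t\<close> above the nearest point \<open>c\<close> were interior, \<open>c\<close> could be
  moved towards \<open>u\<close> within the slice.\<close>

lemma closest_point_cap_slice_not_interior:
  assumes "closed P" "a \<noteq> 0" "cap_slice P a b t \<noteq> {}"
    and u: "height a b u = 0" "u \<notin> cap_slice P a b t"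
  shows "closest_point (cap_slice P a b t) u + t *\<^sub>R sgn a \<notin> interior P"
proof
  let ?C = "cap_slice P a b t"
  define c where "c = closest_point ?C u"
  assume "c + t *\<^sub>R sgn a \<in> interior P"
  then obtain e where e: "e > 0" "ball (c + t *\<^sub>R sgn a) e \<subseteq> P" using mem_interior by blast
  have c: "c \<in> ?C" unfolding c_def using assms by (intro closest_point_in_set closed_cap_slice)
  then have "c \<noteq> u" using u by auto
  define n where "n = dist u c"
  have n: "n > 0" unfolding n_def using \<open>c \<noteq> u\<close> by simp
  define \<epsilon> where "\<epsilon> = min (1/2) (e / (2 * n))"
  have \<epsilon>: "0 < \<epsilon>" "\<epsilon> < 1" "\<epsilon> * n < e" unfolding \<epsilon>_def using e n by (auto simp: min_def field_simps)
  define w where "w = c + \<epsilon> *\<^sub>R (u - c)"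
  have "height a b w = 0"
    using c u assms(2) by (simp add: w_def cap_slice_def height_def inner_add_right inner_diff_right)
  moreover have "dist (c + t *\<^sub>R sgn a) (w + t *\<^sub>R sgn a) = \<epsilon> * n"
    using \<epsilon> by (simp add: w_def n_def dist_norm norm_minus_commute)
  ultimately have "w \<in> ?C" using e \<epsilon> by (auto simp: cap_slice_def)
  moreover have "dist u w = (1 - \<epsilon>) * n"
  proof -
    have "u - w = (1 - \<epsilon>) *\<^sub>R (u - c)" by (simp add: w_def algebra_simps)
    then show ?thesis using \<epsilon> by (simp add: n_def dist_norm)
  qed
  ultimately have "dist u c \<le> (1 - \<epsilon>) * n"
    unfolding c_def by (metis closest_point_le closed_cap_slice assms(1))
  moreover have "0 < \<epsilon> * n" using \<epsilon> n by simp
  ultimately show False unfolding n_def by (simp add: algebra_simps)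
qed

context
  fixes P :: "'a::euclidean_space set" and a :: 'a and b :: real and t :: real
  assumes compact: "compact P" and convex: "convex P" and a: "a \<noteq> 0"
    and symmetric: "reflect a b ` frontier P = frontier P"
    and t: "0 < t"
begin

lemma foot_mem_cap_slice: "x \<in> P \<Longrightarrow> t \<le> \<bar>height a b x\<bar> \<Longrightarrow> foot a b x \<in> cap_slice P a b t"
  using foot_add_sgn_mem[OF compact convex a symmetric, of x t] t
  by (simp add: cap_slice_def height_foot a)

context
  assumes nonempty: "cap_slice P a b t \<noteq> {}"
begin

lemma cap_fold_fixed: "x \<in> P \<Longrightarrow> t \<le> height a b x \<Longrightarrow> cap_fold P a b t x = x"
  using foot_mem_cap_slice[of x] t by (simp add: cap_fold_def closest_point_self foot_add_height)

lemma cap_fold_slab_not_interior: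
  assumes x: "x \<in> frontier P" and slab: "\<bar>height a b x\<bar> < t"
  shows "cap_fold P a b t x \<notin> interior P"
proof (cases "foot a b x \<in> cap_slice P a b t")
  case True
  then have fold: "cap_fold P a b t x = foot a b x + t *\<^sub>R sgn a"
    using slab by (simp add: cap_fold_def closest_point_self)
  have "x = foot a b (foot a b x + t *\<^sub>R sgn a) + height a b x *\<^sub>R sgn a"
    using a by (simp add: foot_add_sgn foot_eq_self height_foot foot_add_height)
  moreover have "\<bar>height a b x\<bar> \<le> \<bar>height a b (foot a b x + t *\<^sub>R sgn a)\<bar>"
    using slab a by (simp add: height_add_sgn height_foot)
  ultimately show ?thesis
    using foot_add_sgn_interior[OF compact convex a symmetric] x fold
    by (fastforce simp: frontier_def)
next
  case False
  then show ?thesis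
    using closest_point_cap_slice_not_interior[OF compact_imp_closed[OF compact] a nonempty] slab a
    by (simp add: cap_fold_def height_foot)
qed

lemma cap_fold_frontier:
  assumes x: "x \<in> frontier P"
  shows "cap_fold P a b t x \<in> frontier P"
proof -
  have closed: "closed P" using compact by (rule compact_imp_closed)
  have frontier: "frontier P = P - interior P" using closed by (simp add: frontier_def)
  show ?thesis
  proof (cases "t \<le> \<bar>height a b x\<bar>")
    case True
    then have "cap_fold P a b t x = foot a b x + \<bar>height a b x\<bar> *\<^sub>R sgn a"
      using foot_mem_cap_slice x frontier by (simp add: cap_fold_def closest_point_self)
    then have "cap_fold P a b t x = x \<or> cap_fold P a b t x = reflect a b x"
      by (simp add: reflect_eq_foot[OF a] foot_add_height abs_if)
    then show ?thesis using x symmetric by auto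
  next
    case False
    have "cap_fold P a b t x \<in> P"
      using False closest_point_in_set[OF closed_cap_slice[OF closed] nonempty]
      by (auto simp: cap_fold_def cap_slice_def)
    then show ?thesis using cap_fold_slab_not_interior[OF x] False frontier by simp
  qed
qed

lemma intrinsic_dist_le_cap_fold_path:
  assumes pq: "p \<in> P" "t \<le> height a b p" "q \<in> P" "t \<le> height a b q"
    and g: "path g" "path_image g \<subseteq> frontier P" "pathstart g = p" "pathfinish g = reflect a b q"
    and L: "path_len g = ereal L"
  shows "0 < L" and "intrinsic_dist (frontier P) p q \<le> ereal (L - 2 * t\<^sup>2 / L)"
proof -
  have "0 \<le> height a b (pathstart g)" "height a b (pathfinish g) \<le> 0"
    using g(3,4) pq t by (auto simp: height_reflect[OF a])
  then obtain s where s: "s \<in> {0..1}" "height a b (g s) = 0"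
    using path_crosses_hyperplane[OF g(1)] by blast
  have clipped: "clipped_height a b t (g 0) = t" "clipped_height a b t (g 1) = t"
    "clipped_height a b t (g s) = 0"
    using g(3,4) pq t s by (auto simp: clipped_height_def pathstart_def pathfinish_def height_reflect[OF a])
  let ?h = "cap_fold P a b t \<circ> g"
  note contraction = cap_fold_contraction[OF convex compact_imp_closed[OF compact] a nonempty]
  show "0 < L"
    by (rule path_len_compose_shortening(1)[OF L t contraction clipped s(1)])
  have short: "path_len ?h \<le> ereal (L - 2 * t\<^sup>2 / L)"
    by (rule path_len_compose_shortening(2)[OF L t contraction clipped s(1)])
  have "path ?h"
    using g(1) continuous_on_cap_fold[OF convex compact_imp_closed[OF compact] a nonempty]
    by (rule path_continuous_image)
  moreover have "path_image ?h \<subseteq> frontier P" using g(2) cap_fold_frontier by (auto simp: path_image_compose)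
  moreover have "pathstart ?h = p" "pathfinish ?h = q"
    using g(3,4) pq cap_fold_fixed cap_fold_reflect[OF a] by (simp_all add: pathstart_def pathfinish_def)
  ultimately show "intrinsic_dist (frontier P) p q \<le> ereal (L - 2 * t\<^sup>2 / L)"
    using intrinsic_dist_le_path_len[of ?h "frontier P"] short by fastforce
qed

end

end

section \<open>Boundary points at finite intrinsic distance\<close>

lemma closest_point_in_frontier:
  fixes P :: "'a::euclidean_space set"
  assumes "closed P" "interior P \<noteq> {}" "x \<notin> interior P"
  shows "closest_point P x \<in> frontier P"
proof -
  have "P \<noteq> {}" using assms(2) interior_subset by blast
  then have "closest_point P x \<notin> interior P"
    using closest_point_in_rel_interior[OF assms(1), of x] assms
    by (simp add: rel_interior_nonempty_interior affine_hull_nonempty_interior)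
  then show ?thesis
    using closest_point_in_set[OF assms(1) \<open>P \<noteq> {}\<close>] assms(1) by (simp add: frontier_def)
qed

lemma lipschitz_on_linepath: "(norm (y - x))-lipschitz_on S (linepath x y)"
proof (rule lipschitz_onI)
  fix s t :: real
  have "linepath x y s - linepath x y t = (s - t) *\<^sub>R (y - x)"
    by (simp add: linepath_def algebra_simps)
  then show "dist (linepath x y s) (linepath x y t) \<le> norm (y - x) * dist s t"
    by (simp add: dist_norm dist_real_def mult.commute)
qed simp

lemma lipschitz_on_joinpaths:
  assumes g1: "C-lipschitz_on {0..1} g1" and g2: "C-lipschitz_on {0..1} g2"
    and "g1 1 = g2 0"
  shows "(2 * C)-lipschitz_on {0..1} (g1 +++ g2)"
proof -
  have double: "2-lipschitz_on {0..1/2} (\<lambda>s::real. 2 * s)" "2-lipschitz_on {1/2..1} (\<lambda>s::real. 2 * s - 1)"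
    by (auto intro!: lipschitz_onI simp: dist_real_def abs_if)
  have "(C * 2)-lipschitz_on {0..1/2} (\<lambda>s. g1 (2 * s))"
    by (rule lipschitz_on_compose2[OF double(1) lipschitz_on_subset[OF g1]]) auto
  moreover have "(C * 2)-lipschitz_on {1/2..1} (\<lambda>s. g2 (2 * s - 1))"
    by (rule lipschitz_on_compose2[OF double(2) lipschitz_on_subset[OF g2]]) auto
  ultimately have "(C * 2)-lipschitz_on {0..1}
      (\<lambda>s. if s \<le> 1/2 then g1 (2 * s) else g2 (2 * s - 1))"
    using assms(3) by (intro lipschitz_on_concat) auto
  then show ?thesis by (simp add: joinpaths_def mult.commute)
qed

lemma intrinsic_dist_frontier_le_lipschitz:
  fixes P :: "'a::euclidean_space set"
  assumes P: "closed P" "convex P" "interior P \<noteq> {}"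
    and G: "K-lipschitz_on {0..1} G" "path_image G \<inter> interior P = {}"
    and ends: "pathstart G \<in> P" "pathfinish G \<in> P"
  shows "intrinsic_dist (frontier P) (pathstart G) (pathfinish G) \<le> ereal K"
proof -
  define g where "g = closest_point P \<circ> G"
  have "P \<noteq> {}" using P(3) interior_subset by blast
  have "1-lipschitz_on (G ` {0..1}) (closest_point P)"
    using closest_point_lipschitz[OF P(2,1) \<open>P \<noteq> {}\<close>] by (intro lipschitz_onI) auto
  then have lip: "K-lipschitz_on {0..1} g"
    unfolding g_def using lipschitz_on_compose[OF G(1)] by fastforce
  then have "path g" unfolding path_def by (rule lipschitz_on_continuous_on)
  moreover have "path_image g \<subseteq> frontier P"
    using G(2) closest_point_in_frontier[OF P(1,3)] by (auto simp: g_def path_image_compose)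
  moreover have "pathstart g = pathstart G" "pathfinish g = pathfinish G"
    using ends by (simp_all add: g_def pathstart_def pathfinish_def closest_point_self)
  ultimately have "intrinsic_dist (frontier P) (pathstart G) (pathfinish G) \<le> path_len g"
    using intrinsic_dist_le_path_len by metis
  also have "\<dots> \<le> ereal K" using lip by (rule path_len_le_lipschitz)
  finally show ?thesis .
qed

lemma closed_segment_radial_disjoint_interior:
  fixes P :: "'a::euclidean_space set"
  assumes "convex P" "c \<in> interior P" "u \<in> frontier P" "dist c u \<le> R"
  shows "closed_segment u (c + R *\<^sub>R sgn (u - c)) \<inter> interior P = {}"
proof -
  have "u \<noteq> c" using assms(2,3) by (auto simp: frontier_def)
  define k where "k = R / norm (u - c)"
  have "norm (u - c) \<le> R" using assms(4) by (simp add: dist_norm norm_minus_commute)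
  then have "1 \<le> k" using \<open>u \<noteq> c\<close> by (simp add: k_def le_divide_eq_1)
  moreover have "c + R *\<^sub>R sgn (u - c) = c + k *\<^sub>R (u - c)"
    by (simp add: k_def sgn_div_norm divide_inverse)
  ultimately have k: "1 \<le> k" "c + R *\<^sub>R sgn (u - c) = c + k *\<^sub>R (u - c)" by simp_all
  have "c + m *\<^sub>R (u - c) \<notin> interior P" if "1 \<le> m" for m
  proof
    assume y: "c + m *\<^sub>R (u - c) \<in> interior P"
    have "u = (1 - 1/m) *\<^sub>R c + (1/m) *\<^sub>R (c + m *\<^sub>R (u - c))"
      using that by (simp add: algebra_simps)
    then have "u \<in> interior P"
      using convexD[OF convex_interior[OF assms(1)] assms(2) y, of "1 - 1/m" "1/m"] that by simp
    then show False using assms(3) by (simp add: frontier_def)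
  qed
  moreover have "x = c + (1 - t + t * k) *\<^sub>R (u - c)" "1 \<le> 1 - t + t * k"
    if "x = (1 - t) *\<^sub>R u + t *\<^sub>R (c + k *\<^sub>R (u - c))" "0 \<le> t" for x t
    using that k(1) mult_left_mono[OF k(1) \<open>0 \<le> t\<close>] by (simp_all add: algebra_simps)
  ultimately show ?thesis unfolding k(2) by (fastforce simp: in_segment)
qed

lemma closed_segment_far_disjoint_cball:
  fixes c e1 e2 :: "'a::euclidean_space"
  assumes e: "norm e1 = 1" "norm e2 = 1" "0 \<le> e1 \<bullet> e2" and R: "2 * r < R"
  shows "closed_segment (c + R *\<^sub>R e1) (c + R *\<^sub>R e2) \<inter> cball c r = {}"
proof -
  have "r < dist c (c + R *\<^sub>R ((1 - t) *\<^sub>R e1 + t *\<^sub>R e2))" if "0 \<le> t" "t \<le> 1" for t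
  proof -
    have "(norm ((1 - t) *\<^sub>R e1 + t *\<^sub>R e2))\<^sup>2 = (1 - t)\<^sup>2 + t\<^sup>2 + 2 * (1 - t) * t * (e1 \<bullet> e2)"
    proof -
      have "e1 \<bullet> e1 = 1" "e2 \<bullet> e2 = 1" using e by (simp_all add: dot_square_norm)
      then show ?thesis
        unfolding power2_norm_eq_inner
        by (simp add: inner_add_left inner_add_right inner_commute power2_eq_square algebra_simps)
    qed
    moreover have "0 \<le> 2 * (1 - t) * t * (e1 \<bullet> e2)" using that e by simp
    moreover have "(1 - t)\<^sup>2 + t\<^sup>2 = 2 * (t - 1/2)\<^sup>2 + 1/2" by (simp add: power2_eq_square algebra_simps)
    ultimately have "1/2 \<le> (norm ((1 - t) *\<^sub>R e1 + t *\<^sub>R e2))\<^sup>2"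
      by (smt (verit) zero_le_power2)
    then have "R\<^sup>2 * (1/2) \<le> R\<^sup>2 * (norm ((1 - t) *\<^sub>R e1 + t *\<^sub>R e2))\<^sup>2"
      by (intro mult_left_mono) auto
    then have far: "R\<^sup>2 / 2 \<le> (dist c (c + R *\<^sub>R ((1 - t) *\<^sub>R e1 + t *\<^sub>R e2)))\<^sup>2"
      by (simp add: dist_norm power_mult_distrib)
    show ?thesis
    proof (cases "r < 0")
      case False
      then have "(2 * r)\<^sup>2 < R\<^sup>2" using R by (intro power_strict_mono) auto
      then have "4 * r\<^sup>2 < R\<^sup>2" by (simp add: power_mult_distrib)
      then have "r\<^sup>2 < (dist c (c + R *\<^sub>R ((1 - t) *\<^sub>R e1 + t *\<^sub>R e2)))\<^sup>2"
        using far zero_le_power2[of r] by linarith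
      then show ?thesis by (rule power_less_imp_less_base) simp
    qed (simp add: less_le_trans[OF _ zero_le_dist])
  qed
  moreover have "(1 - t) *\<^sub>R (c + R *\<^sub>R e1) + t *\<^sub>R (c + R *\<^sub>R e2) = c + R *\<^sub>R ((1 - t) *\<^sub>R e1 + t *\<^sub>R e2)"
    for t by (simp add: algebra_simps)
  ultimately show ?thesis by (fastforce simp: in_segment)
qed

lemma exists_unit_vector_nonneg_inner:
  fixes x y :: "'a::euclidean_space"
  assumes "DIM('a) \<ge> 2"
  obtains w where "norm w = 1" "0 \<le> w \<bullet> x" "0 \<le> w \<bullet> y"
proof -
  obtain z where z: "z \<noteq> 0" "orthogonal x z" using orthogonal_to_vector_exists[OF assms] by blast
  define w where "w = ((if 0 \<le> z \<bullet> y then 1 else -1) / norm z) *\<^sub>R z"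
  have "norm w = 1" "w \<bullet> x = 0" "0 \<le> w \<bullet> y"
    using z by (auto simp: w_def orthogonal_def inner_commute divide_simps)
  then show ?thesis using that by simp
qed

lemma lipschitz_on_linepath_cball:
  assumes "x \<in> cball c R" "y \<in> cball c R"
  shows "(2 * R)-lipschitz_on S (linepath x y)"
  using assms dist_triangle[of x y c]
  by (intro lipschitz_on_le[OF lipschitz_on_linepath]) (auto simp: dist_norm norm_minus_commute)

text \<open>The detour runs radially from \<open>u\<close> out to the sphere of radius \<open>R = 2r + 1\<close> about an
  interior point \<open>c\<close>, along two chords of that sphere through \<open>c + R w\<close>, and radially back to \<open>v\<close>;
  since \<open>w\<close> makes non-obtuse angles with both radial directions, the chords miss \<open>cball c r \<supseteq> P\<close>.\<close>

lemma exists_lipschitz_path_avoiding_interior: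
  fixes P :: "'a::euclidean_space set"
  assumes dim: "DIM('a) \<ge> 2" and convex: "convex P" and c: "c \<in> interior P"
    and r: "P \<subseteq> cball c r" and u: "u \<in> frontier P" and v: "v \<in> frontier P"
  obtains G K where "K-lipschitz_on {0..1} G" "path_image G \<inter> interior P = {}"
    "pathstart G = u" "pathfinish G = v"
proof -
  have "closure P \<subseteq> cball c r" using r by (simp add: closure_minimal)
  then have uv: "u \<in> cball c r" "v \<in> cball c r" using u v by (auto simp: frontier_def)
  then have "0 \<le> r" by (meson mem_cball order_trans zero_le_dist)
  define R where "R = 2 * r + 1"
  have R: "2 * r < R" "r < R" "0 \<le> R" using \<open>0 \<le> r\<close> by (simp_all add: R_def)
  have "u \<noteq> c" "v \<noteq> c" using u v c by (auto simp: frontier_def)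
  obtain w where w: "norm w = 1" "0 \<le> w \<bullet> sgn (u - c)" "0 \<le> w \<bullet> sgn (v - c)"
    using exists_unit_vector_nonneg_inner[OF dim] by blast
  define U V W where "U = c + R *\<^sub>R sgn (u - c)" and "V = c + R *\<^sub>R sgn (v - c)"
    and "W = c + R *\<^sub>R w"
  define G where "G = linepath u U +++ linepath U W +++ linepath W V +++ linepath V v"
  have far: "closed_segment (c + R *\<^sub>R e1) (c + R *\<^sub>R e2) \<inter> interior P = {}"
    if "norm e1 = 1" "norm e2 = 1" "0 \<le> e1 \<bullet> e2" for e1 e2
    using closed_segment_far_disjoint_cball[OF that R(1)] r interior_subset by blast
  have "path_image G \<inter> interior P = {}"
    using closed_segment_radial_disjoint_interior[OF convex c u, of R]
      closed_segment_radial_disjoint_interior[OF convex c v, of R] uv R(2) w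
      far[of "sgn (u - c)" w] far[of w "sgn (v - c)"] \<open>u \<noteq> c\<close> \<open>v \<noteq> c\<close>
    by (auto simp: G_def U_def V_def W_def path_image_join norm_sgn inner_commute
        closed_segment_commute[of _ v])
  moreover have "u \<in> cball c R" "v \<in> cball c R" "U \<in> cball c R" "V \<in> cball c R" "W \<in> cball c R"
    using uv R w \<open>u \<noteq> c\<close> \<open>v \<noteq> c\<close> by (auto simp: U_def V_def W_def dist_norm norm_sgn)
  then have "(2 * (2 * (2 * (2 * R))))-lipschitz_on {0..1} G"
    unfolding G_def using R(3)
    by (intro lipschitz_on_joinpaths lipschitz_on_le[OF lipschitz_on_linepath_cball[where c = c and R = R]])
      (auto simp: linepath_def joinpaths_def)
  ultimately show ?thesis using that by (simp add: G_def)
qed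

lemma intrinsic_dist_frontier_finite:
  fixes P :: "'a::euclidean_space set"
  assumes dim: "DIM('a) \<ge> 2" and P: "compact P" "convex P" "interior P \<noteq> {}"
    and u: "u \<in> frontier P" and v: "v \<in> frontier P"
  shows "intrinsic_dist (frontier P) u v < \<infinity>"
proof -
  obtain c where c: "c \<in> interior P" using P(3) by blast
  obtain r where r: "P \<subseteq> cball c r"
    using bounded_subset_ballD[OF compact_imp_bounded[OF P(1)], of c] ball_subset_cball by blast
  obtain G K where G: "K-lipschitz_on {0..1} G" "path_image G \<inter> interior P = {}"
    and ends: "pathstart G = u" "pathfinish G = v"
    using exists_lipschitz_path_avoiding_interior[OF dim P(2) c r u v] by blast
  have "u \<in> P" "v \<in> P" using u v compact_imp_closed[OF P(1)] by (auto simp: frontier_def)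
  then have "intrinsic_dist (frontier P) u v \<le> ereal K"
    using intrinsic_dist_frontier_le_lipschitz[OF compact_imp_closed[OF P(1)] P(2,3) G] ends by simp
  then show ?thesis using le_less_trans by fastforce
qed

section \<open>Farthest points\<close>

lemma intrinsic_dist_lt_reflect:
  fixes P :: "'a::euclidean_space set"
  assumes compact: "compact P" and convex: "convex P" and a: "a \<noteq> 0"
    and symmetric: "reflect a b ` frontier P = frontier P"
    and p: "p \<in> frontier P" "0 < height a b p" and q: "q \<in> frontier P" "0 < height a b q"
    and finite: "intrinsic_dist (frontier P) p (reflect a b q) < \<infinity>"
  shows "intrinsic_dist (frontier P) p q < intrinsic_dist (frontier P) p (reflect a b q)"
proof -
  let ?M = "frontier P"
  have pq: "p \<in> P" "q \<in> P" using p q compact_imp_closed[OF compact] by (auto simp: frontier_def)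
  define t where "t = min (height a b p) (height a b q)"
  have t: "0 < t" "t \<le> height a b p" "t \<le> height a b q" using p q by (auto simp: t_def)
  then have nonempty: "cap_slice P a b t \<noteq> {}"
    using foot_mem_cap_slice[OF compact convex a symmetric t(1) \<open>q \<in> P\<close>] by auto
  note fold = intrinsic_dist_le_cap_fold_path[OF compact convex a symmetric t(1) nonempty
      pq(1) t(2) pq(2) t(3)]
  obtain D where D: "intrinsic_dist ?M p (reflect a b q) = ereal D" "0 \<le> D"
    using finite intrinsic_dist_nonneg[of ?M p "reflect a b q"]
    by (cases "intrinsic_dist ?M p (reflect a b q)") auto
  \<comment> \<open>a path within \<open>\<delta>\<close> of optimal has length \<open>L \<le> D + 1\<close>, so folding gains \<open>2t\<^sup>2/L \<ge> \<delta>\<close>\<close>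
  define \<delta> where "\<delta> = min 1 (2 * t\<^sup>2 / (D + 1))"
  have \<delta>: "0 < \<delta>" "\<delta> \<le> 1" "\<delta> \<le> 2 * t\<^sup>2 / (D + 1)" using t D(2) by (auto simp: \<delta>_def)
  obtain g where g: "path g" "path_image g \<subseteq> ?M" "pathstart g = p" "pathfinish g = reflect a b q"
    and short: "path_len g < ereal (D + \<delta>)"
    using D \<delta> intrinsic_dist_less_iff[of ?M p "reflect a b q" "ereal (D + \<delta>)"] by auto
  have "D \<le> path_len g" using intrinsic_dist_le_path_len[OF g(1,2)] D g(3,4) by simp
  then obtain L where L: "path_len g = ereal L" "D \<le> L" "L < D + \<delta>"
    using short by (cases "path_len g") auto
  have "2 * t\<^sup>2 / (D + 1) \<le> 2 * t\<^sup>2 / L"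
    using fold(1)[OF g L(1)] L \<delta> by (intro divide_left_mono) auto
  then have "L - 2 * t\<^sup>2 / L < D" using L \<delta> by linarith
  then show ?thesis using fold(2)[OF g L(1)] D(1) by (simp add: le_less_trans)
qed

lemma farthest_point_not_same_side:
  fixes P :: "'a::euclidean_space set"
  assumes dim: "DIM('a) \<ge> 2" and P: "compact P" "convex P" "interior P \<noteq> {}"
    and a: "a \<noteq> 0" and symmetric: "reflect a b ` frontier P = frontier P"
    and p: "p \<in> frontier P" "0 < height a b p"
    and far: "farthest_point (frontier P) p q" and q: "0 < height a b q"
  shows False
proof -
  have "q \<in> frontier P" using far by (simp add: farthest_point_def)
  then have rq: "reflect a b q \<in> frontier P" using symmetric by blast
  then have "intrinsic_dist (frontier P) p q < intrinsic_dist (frontier P) p (reflect a b q)"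
    using intrinsic_dist_lt_reflect[OF P(1,2) a symmetric p \<open>q \<in> frontier P\<close> q]
      intrinsic_dist_frontier_finite[OF dim P p(1)] by blast
  then show False using far rq by (auto simp: farthest_point_def not_le[symmetric])
qed

lemma intrinsic_dist_reflect_le:
  assumes a: "a \<noteq> 0" and symmetric: "reflect a b ` M \<subseteq> M" and p: "a \<bullet> p = b"
  shows "intrinsic_dist M p (reflect a b x) \<le> intrinsic_dist M p x"
  unfolding intrinsic_dist_def
proof (rule INF_mono)
  fix g assume g: "g \<in> {g. path g \<and> path_image g \<subseteq> M \<and> pathstart g = p \<and> pathfinish g = x}"
  have "path (reflect a b \<circ> g)" using g continuous_on_reflect by (auto intro: path_continuous_image)
  moreover have "path_image (reflect a b \<circ> g) \<subseteq> M" using g symmetric by (auto simp: path_image_compose)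
  moreover have "pathstart (reflect a b \<circ> g) = p" "pathfinish (reflect a b \<circ> g) = reflect a b x"
    using g p by (auto simp: pathstart_def pathfinish_def reflect_fixed)
  moreover have "path_len (reflect a b \<circ> g) \<le> path_len g"
    by (intro path_len_compose_le lipschitz_onI) (simp_all add: dist_reflect[OF a])
  ultimately show "\<exists>h\<in>{g. path g \<and> path_image g \<subseteq> M \<and> pathstart g = p \<and> pathfinish g = reflect a b x}.
      path_len h \<le> path_len g"
    by blast
qed

lemma farthest_point_reflect:
  assumes a: "a \<noteq> 0" and symmetric: "reflect a b ` M = M" and p: "a \<bullet> p = b"
    and far: "farthest_point M p q"
  shows "farthest_point M p (reflect a b q)"
proof -
  have "intrinsic_dist M p q \<le> intrinsic_dist M p (reflect a b q)"
    using intrinsic_dist_reflect_le[OF a _ p, where x = "reflect a b q"] symmetric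
    by (simp add: reflect_reflect[OF a])
  then show ?thesis using far symmetric by (auto simp: farthest_point_def intro: order_trans)
qed

theorem mainTheorem6:
  fixes P :: "'a::euclidean_space set" and a :: 'a and b :: real and p q :: 'a
  assumes dim: "DIM('a) \<ge> 2"
    and poly: "polytope P" and body: "interior P \<noteq> {}"
    and a0: "a \<noteq> 0"
    and symm: "reflect a b ` (frontier P) = frontier P"
    and pM: "p \<in> frontier P"
    and far: "farthest_point (frontier P) p q"
  shows "(p \<notin> {x. a \<bullet> x = b} \<and> q \<notin> {x. a \<bullet> x = b} \<longrightarrow>
            (a \<bullet> p - b) * (a \<bullet> q - b) < 0)
       \<and> (p \<in> {x. a \<bullet> x = b} \<longrightarrow> farthest_point (frontier P) p (reflect a b q))"
proof (intro conjI impI)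
  have P: "compact P" "convex P" "interior P \<noteq> {}"
    using poly body by (simp_all add: polytope_imp_compact polytope_imp_convex)
  note same_side = farthest_point_not_same_side[OF dim P _ _ pM _ far]
  assume "p \<notin> {x. a \<bullet> x = b} \<and> q \<notin> {x. a \<bullet> x = b}"
  then consider "b < a \<bullet> p" "b < a \<bullet> q" | "a \<bullet> p < b" "a \<bullet> q < b" | "(a \<bullet> p - b) * (a \<bullet> q - b) < 0"
    by (auto simp: mult_less_0_iff) linarith+
  then show "(a \<bullet> p - b) * (a \<bullet> q - b) < 0"
  proof cases
    case 1
    then show ?thesis using same_side[OF a0 symm] by (simp add: height_pos_iff[OF a0])
  next
    case 2
    then show ?thesis
      using same_side[of "- a" "- b"] a0 symm by (simp add: reflect_uminus height_pos_iff)
  qed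
next
  assume "p \<in> {x. a \<bullet> x = b}"
  then show "farthest_point (frontier P) p (reflect a b q)"
    using farthest_point_reflect[OF a0 symm _ far] by simp
qed

end
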